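(* With $\omega(N)=\frac{1}{\sqrt N}\sum_{i=1}^N\omega_i$ on the discrete V-monotone Fock space and $\varphi$ the vacuum state, for every $k\in\mathbb{N}$: $\lim_{N\to\infty}\varphi(\omega(N)^{2k})=|\mathcal{OV}^2(2k)|/k!$ and $\lim_{N\to\infty}\varphi(\omega(N)^{2k+1})=0$.
   Context: $I=\mathbb{N}_+$; $I_n$ is the set of $(i_1,\dots,i_n)\in I^n$ with $i_1>\dots>i_m<\dots<i_n$ for some $m$ (strict), $\mathbb 1_n$ its indicator. $\mathcal{DV}$ has orthonormal basis $\{\Omega\}\cup\{e_{i_1}\otimes\dots\otimes e_{i_n}:(i_1,\dots,i_n)\in I_n\}$; $a_i\Omega=e_i$, $a_i(e_{i_1}\otimes\dots\otimes e_{i_n})=\mathbb 1_{n+1}(i,i_1,\dots,i_n)e_i\otimes e_{i_1}\otimes\dots\otimes e_{i_n}$; $a_i^*$ its adjoint; $\omega_i=a_i+a_i^*$; $\varphi(T)=\langle T\Omega,\Omega\rangle$. $\mathcal{OV}^2(2k)$: pairs $(\pi,\mathfrak i)$ with $\pi$ a non-crossing pair partition of $[2k]$ and $\mathfrak i:\pi\to[k]$ a bijection such that along every sequence of blocks $B_1,\dots,B_r$ with $B_{j+1}$ the nearest outer block of $B_j$ (i.e. $B_j$ lies strictly between the two legs of $B_{j+1}$ and no other block lies in between in this sense), $(\mathfrak i(B_1),\dots,\mathfrak i(B_r))\in I_r$. *)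

theory Defs
  imports Complex_Main "HOL-Library.FuncSet" "HOL-Library.Disjoint_Sets"
begin

text \<open>The empty word (n = 0) is admitted; it indexes the vacuum vector Omega.\<close>
definition vword :: "nat list \<Rightarrow> bool" where
  "vword w \<longleftrightarrow> (\<forall>i\<in>set w. 0 < i) \<and>
     (w = [] \<or> (\<exists>m<length w. (\<forall>j. Suc j \<le> m \<longrightarrow> w ! j > w ! Suc j) \<and>
                          (\<forall>j. m \<le> j \<and> Suc j < length w \<longrightarrow> w ! j < w ! Suc j)))"

text \<open>Vectors of the discrete V-monotone Fock space, given by their coefficients
with respect to the orthonormal basis indexed by V-shaped words ([] = Omega).\<close>
type_synonym vec = "nat list \<Rightarrow> real"

definition Omega :: vec where
  "Omega = (\<lambda>u. if u = [] then 1 else 0)"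

text \<open>creation operator a_i: e_w \<mapsto> 1_{n+1}(i,w) e_{i w}\<close>
definition acr :: "nat \<Rightarrow> vec \<Rightarrow> vec" where
  "acr i v = (\<lambda>u. case u of [] \<Rightarrow> 0 | j # w \<Rightarrow> (if j = i \<and> vword u then v w else 0))"

text \<open>annihilation operator a_i^*, the adjoint of a_i\<close>
definition aan :: "nat \<Rightarrow> vec \<Rightarrow> vec" where
  "aan i v = (\<lambda>w. if vword (i # w) then v (i # w) else 0)"

definition omega :: "nat \<Rightarrow> vec \<Rightarrow> vec" where
  "omega i v = (\<lambda>u. acr i v u + aan i v u)"

definition omegaN :: "nat \<Rightarrow> vec \<Rightarrow> vec" where
  "omegaN N v = (\<lambda>u. (1 / sqrt (real N)) * (\<Sum>i = 1..N. omega i v u))"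

text \<open>vacuum state phi(T) = <T Omega, Omega>\<close>
definition vac :: "(vec \<Rightarrow> vec) \<Rightarrow> real" where
  "vac T = T Omega []"

definition pair_partition :: "nat \<Rightarrow> nat set set \<Rightarrow> bool" where
  "pair_partition n P \<longleftrightarrow> partition_on {1..n} P \<and> (\<forall>B\<in>P. card B = 2)"

definition noncrossing :: "nat set set \<Rightarrow> bool" where
  "noncrossing P \<longleftrightarrow> (\<forall>B\<in>P. \<forall>C\<in>P. \<not> (Min B < Min C \<and> Min C < Max B \<and> Max B < Max C))"

definition inside :: "nat set \<Rightarrow> nat set \<Rightarrow> bool" where
  "inside B C \<longleftrightarrow> Min C < Min B \<and> Max B < Max C"

definition nearest_outer :: "nat set set \<Rightarrow> nat set \<Rightarrow> nat set \<Rightarrow> bool" where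
  "nearest_outer P B C \<longleftrightarrow> B \<in> P \<and> C \<in> P \<and> inside B C \<and>
     \<not> (\<exists>D\<in>P. inside B D \<and> inside D C)"

definition OV2 :: "nat \<Rightarrow> (nat set set \<times> (nat set \<Rightarrow> nat)) set" where
  "OV2 k = {(P, f). pair_partition (2 * k) P \<and> noncrossing P \<and>
     f \<in> extensional P \<and> bij_betw f P {1..k} \<and>
     (\<forall>Bs. Bs \<noteq> [] \<and> set Bs \<subseteq> P \<and>
        (\<forall>j. Suc j < length Bs \<longrightarrow> nearest_outer P (Bs ! j) (Bs ! Suc j))
        \<longrightarrow> vword (map f Bs))}"

end

theory Submission
  imports Defs
begin

text \<open>Expanding \<open>\<phi>(\<omega>(N)\<^sup>n)\<close> in the basis turns it into \<open>N\<^sup>-\<^sup>n\<^sup>/\<^sup>2\<close> times the number of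
  words over \<open>{0..N}\<close> describing a path of basis vectors from \<open>\<Omega>\<close> back to \<open>\<Omega>\<close> through
  V-shaped words; there are none for odd \<open>n\<close>.  For \<open>n = 2k\<close> a path carries \<open>k\<close> labels.
  Paths with a repeated label are \<open>O(N\<^sup>k\<^sup>-\<^sup>1)\<close>, while paths with distinct labels fall into
  \<open>N choose k\<close> classes of equal size according to their set of labels, because relabelling by
  an order isomorphism preserves V-shapes.  Hence the limit is \<open>|D\<^sub>k| / k!\<close>, where \<open>D\<^sub>k\<close> are
  the paths labelled by \<open>{1..k}\<close>.  Matching every \<open>0\<close> with the most recent unmatched label
  (a stack) turns such a path into a non-crossing pair partition labelled bijectively by
  \<open>{1..k}\<close>; the stack at each label consists of the block and its chain of nearest outer
  blocks, so the V-shape condition on the stack is exactly the condition defining \<open>\<O>\<V>\<^sup>2(2k)\<close>.\<close>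

section \<open>Vacuum moments as numbers of paths\<close>

text \<open>The word \<open>xs\<close> lists the factors of \<open>\<omega>(N)\<^sup>n\<close> from the left, starting from the
  coefficient at \<open>e\<^sub>u\<close>: a letter \<open>i > 0\<close> stands for the term \<open>a\<^sub>i\<^sup>*\<close>, whose coefficient at \<open>e\<^sub>u\<close>
  is read off at \<open>e\<^sub>i\<^sub>u\<close>, and the letter \<open>0\<close> for the one term of \<open>\<Sum>\<^sub>i a\<^sub>i\<close> that
  can contribute, read off at \<open>e\<^sub>t\<^sub>l \<^sub>u\<close>.\<close>

fun path_to_vacuum :: "nat list \<Rightarrow> nat list \<Rightarrow> bool" where
  "path_to_vacuum u [] \<longleftrightarrow> u = []"
| "path_to_vacuum u (x # xs) \<longleftrightarrow>
     (if x = 0 then u \<noteq> [] \<and> path_to_vacuum (tl u) xs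
      else vword (x # u) \<and> path_to_vacuum (x # u) xs)"

definition paths :: "nat \<Rightarrow> nat \<Rightarrow> nat list \<Rightarrow> nat list set" where
  "paths N n u = {xs. set xs \<subseteq> {..N} \<and> length xs = n \<and> path_to_vacuum u xs}"

lemma vword_ConsD:
  assumes "vword (j # w)"
  shows "vword w"
proof (cases "w = []")
  case True
  then show ?thesis by (simp add: vword_def)
next
  case False
  from assms obtain m where m: "m < length (j # w)"
      "\<forall>i. Suc i \<le> m \<longrightarrow> (j # w) ! i > (j # w) ! Suc i"
      "\<forall>i. m \<le> i \<and> Suc i < length (j # w) \<longrightarrow> (j # w) ! i < (j # w) ! Suc i"
    and pos: "\<forall>i\<in>set (j # w). 0 < i"
    unfolding vword_def by auto
  show ?thesis
    unfolding vword_def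
  proof (intro conjI disjI2 exI[of _ "m - 1"] allI impI)
    show "\<forall>i\<in>set w. 0 < i" using pos by auto
    show "m - 1 < length w" using m(1) False by (cases w) auto
  next
    fix i assume "Suc i \<le> m - 1"
    then show "w ! i > w ! Suc i" using m(2)[rule_format, of "Suc i"] by auto
  next
    fix i assume "m - 1 \<le> i \<and> Suc i < length w"
    then show "w ! i < w ! Suc i" using m(3)[rule_format, of "Suc i"] by auto
  qed
qed

lemma vword_take: "vword w \<Longrightarrow> vword (take r w)"
proof -
  assume v: "vword w"
  show ?thesis
  proof (cases "take r w = []")
    case True then show ?thesis by (subst True) (simp add: vword_def)
  next
    case False
    have wne: "w \<noteq> []" using False by auto
    have pos: "\<forall>i\<in>set w. 0 < i" using v by (simp add: vword_def)
    obtain m where m: "m < length w"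
      "\<forall>j. Suc j \<le> m \<longrightarrow> w ! j > w ! Suc j"
      "\<forall>j. m \<le> j \<and> Suc j < length w \<longrightarrow> w ! j < w ! Suc j"
      using v wne unfolding vword_def by blast
    let ?l = "length (take r w)"
    have l: "0 < ?l" using False by simp
    show ?thesis unfolding vword_def
    proof (intro conjI disjI2)
      show "\<forall>i\<in>set (take r w). 0 < i" using pos by (auto dest: in_set_takeD)
      show "\<exists>m<length (take r w). (\<forall>j. Suc j \<le> m \<longrightarrow> take r w ! j > take r w ! Suc j) \<and>
          (\<forall>j. m \<le> j \<and> Suc j < length (take r w) \<longrightarrow> take r w ! j < take r w ! Suc j)"
      proof (rule exI[of _ "min m (?l - 1)"], intro conjI allI impI)
        show "min m (?l - 1) < ?l" using l by linarith
      next
        fix j assume "Suc j \<le> min m (?l - 1)"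
        then show "take r w ! j > take r w ! Suc j" using m(2) l by auto
      next
        fix j assume "min m (?l - 1) \<le> j \<and> Suc j < ?l"
        then show "take r w ! j < take r w ! Suc j" using m(3) by auto
      qed
    qed
  qed
qed

lemma card_lists_Suc_eq_sum:
  assumes "finite A"
  shows "card {xs. set xs \<subseteq> A \<and> length xs = Suc n \<and> Q xs} =
         (\<Sum>x\<in>A. card {xs. set xs \<subseteq> A \<and> length xs = n \<and> Q (x # xs)})"
proof -
  have eq: "{xs. set xs \<subseteq> A \<and> length xs = Suc n \<and> Q xs} =
      (\<Union>x\<in>A. Cons x ` {xs. set xs \<subseteq> A \<and> length xs = n \<and> Q (x # xs)})"
    by (auto simp: length_Suc_conv)
  have fin: "finite {xs. set xs \<subseteq> A \<and> length xs = n \<and> Q (x # xs)}" for x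
    by (rule finite_subset[OF _ finite_lists_length_eq[OF assms, of n]]) auto
  show ?thesis
    unfolding eq by (subst card_UN_disjoint) (auto simp: assms fin card_image)
qed

lemma finite_paths: "finite (paths N n u)"
  unfolding paths_def by (rule finite_subset[OF _ finite_lists_length_eq[of "{..N}" n]]) auto

lemma paths_0: "paths N 0 u = (if u = [] then {[]} else {})"
  by (auto simp: paths_def)

lemma card_paths_Suc:
  "card (paths N (Suc n) u) =
     (if u \<noteq> [] then card (paths N n (tl u)) else 0) +
     (\<Sum>i = 1..N. if vword (i # u) then card (paths N n (i # u)) else 0)"
proof -
  let ?C = "\<lambda>x. card {xs. set xs \<subseteq> {..N} \<and> length xs = n \<and> path_to_vacuum u (x # xs)}"
  have "card (paths N (Suc n) u) = (\<Sum>x\<in>{..N}. ?C x)"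
    unfolding paths_def by (rule card_lists_Suc_eq_sum) simp
  also have "\<dots> = ?C 0 + (\<Sum>x = 1..N. ?C x)"
    by (simp add: atMost_atLeast0 sum.atLeast_Suc_atMost)
  also have "?C 0 = (if u \<noteq> [] then card (paths N n (tl u)) else 0)"
    unfolding paths_def by auto
  also have "(\<Sum>x = 1..N. ?C x) =
      (\<Sum>i = 1..N. if vword (i # u) then card (paths N n (i # u)) else 0)"
    by (rule sum.cong) (auto simp: paths_def)
  finally show ?thesis .
qed

lemma omegaN_power_Omega:
  assumes "vword u" "set u \<subseteq> {1..N}"
  shows "(omegaN N ^^ n) Omega u = (1 / sqrt (real N)) ^ n * real (card (paths N n u))"
  using assms
proof (induction n arbitrary: u)
  case 0
  then show ?case by (cases "u = []") (auto simp: Omega_def paths_0)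
next
  case (Suc n)
  define v where "v = (omegaN N ^^ n) Omega"
  have creation: "(\<Sum>i = 1..N. acr i v u) = (if u \<noteq> [] then v (tl u) else 0)"
  proof (cases u)
    case (Cons j w)
    then have "j \<in> {1..N}" using Suc.prems by auto
    then have "(\<Sum>i = 1..N. acr i v u) = (\<Sum>i = 1..N. if i = j then v w else 0)"
      using Suc.prems by (intro sum.cong) (auto simp: acr_def Cons)
    then show ?thesis using \<open>j \<in> {1..N}\<close> by (simp add: Cons)
  qed (simp add: acr_def)
  have annihilation: "(\<Sum>i = 1..N. aan i v u) = (\<Sum>i = 1..N. if vword (i # u) then
      (1 / sqrt (real N)) ^ n * real (card (paths N n (i # u))) else 0)"
    using Suc.prems by (intro sum.cong) (auto simp: aan_def v_def Suc.IH)
  have tl_IH: "u \<noteq> [] \<Longrightarrow> v (tl u) = (1 / sqrt (real N)) ^ n * real (card (paths N n (tl u)))"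
    using Suc.prems unfolding v_def
    by (intro Suc.IH) (cases u; auto intro: vword_ConsD)+
  have "(omegaN N ^^ Suc n) Omega u =
      1 / sqrt (real N) * ((\<Sum>i = 1..N. acr i v u) + (\<Sum>i = 1..N. aan i v u))"
    by (simp add: v_def omegaN_def omega_def sum.distrib)
  also have "\<dots> = (1 / sqrt (real N)) ^ Suc n * real (card (paths N (Suc n) u))"
    unfolding creation annihilation card_paths_Suc using tl_IH
    by (simp add: sum_distrib_left ring_distribs of_nat_sum if_distrib cong: if_cong)
  finally show ?case .
qed

lemma path_to_vacuum_parity: "path_to_vacuum u xs \<Longrightarrow> even (length u + length xs)"
  by (induction u xs rule: path_to_vacuum.induct) (auto split: if_splits simp: neq_Nil_conv)

lemma vac_omegaN_power: "vac (omegaN N ^^ n) = (1 / sqrt (real N)) ^ n * real (card (paths N n []))"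
  unfolding vac_def by (rule omegaN_power_Omega) (simp_all add: vword_def)

lemma vac_omegaN_power_odd: "vac (omegaN N ^^ (2 * k + 1)) = 0"
proof -
  have "paths N (2 * k + 1) [] = {}"
    unfolding paths_def using path_to_vacuum_parity[of "[]"] by fastforce
  then show ?thesis
    using vac_omegaN_power[where N = N and n = "2 * k + 1"] by (simp del: funpow.simps)
qed

lemma vac_omegaN_power_even:
  "vac (omegaN N ^^ (2 * k)) = real (card (paths N (2 * k) [])) / real N ^ k"
  by (simp add: vac_omegaN_power power_mult power_divide)

section \<open>Paths with distinct labels\<close>

definition labels :: "nat list \<Rightarrow> nat list" where
  "labels xs = filter (\<lambda>x. 0 < x) xs"

lemma path_to_vacuum_length:
  "path_to_vacuum u xs \<Longrightarrow> length xs = 2 * length (labels xs) + length u"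
  by (induction u xs rule: path_to_vacuum.induct) (auto simp: labels_def split: if_splits)

lemma length_labels_paths: "xs \<in> paths N (2 * k) [] \<Longrightarrow> length (labels xs) = k"
  unfolding paths_def using path_to_vacuum_length[of "[]" xs] by auto

lemma set_subset_labels: "set xs \<subseteq> insert 0 (set (labels xs))"
  by (auto simp: labels_def)

lemma labels_map:
  assumes "\<forall>x\<in>set xs. 0 < g x \<longleftrightarrow> 0 < x"
  shows "labels (map g xs) = map g (labels xs)"
  using assms by (induction xs) (auto simp: labels_def)

lemma labels_conv_nth: "labels xs = map (nth xs) (filter (\<lambda>i. 0 < xs ! i) [0..<length xs])"
proof -
  have "labels xs = filter (\<lambda>x. 0 < x) (map (nth xs) [0..<length xs])"
    by (simp add: labels_def map_nth)
  then show ?thesis by (simp add: filter_map o_def)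
qed

lemma distinct_labels_iff:
  "distinct (labels xs) \<longleftrightarrow>
     (\<forall>i<length xs. \<forall>j<length xs. 0 < xs ! i \<longrightarrow> 0 < xs ! j \<longrightarrow> xs ! i = xs ! j \<longrightarrow> i = j)"
  unfolding labels_conv_nth distinct_map inj_on_def by auto

lemma eq_by_signs_and_labels:
  "map (\<lambda>x. 0 < x) xs = map (\<lambda>x. 0 < x) ys \<Longrightarrow> labels xs = labels (ys :: nat list) \<Longrightarrow> xs = ys"
proof (induction xs arbitrary: ys)
  case (Cons x xs)
  then obtain y ys' where "ys = y # ys'" by (cases ys) auto
  with Cons show ?case by (cases "0 < x"; cases "0 < y") (auto simp: labels_def)
qed simp

lemma vword_map_strict_mono:
  assumes g: "strict_mono_on A g" and "g 0 = 0" "0 \<in> A" "set w \<subseteq> A"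
  shows "vword (map g w) \<longleftrightarrow> vword w"
proof -
  have less_iff: "x \<in> A \<Longrightarrow> y \<in> A \<Longrightarrow> g x < g y \<longleftrightarrow> x < y" for x y
    using strict_mono_on_less[OF g] by blast
  have nth_in: "i < length w \<Longrightarrow> w ! i \<in> A" for i using assms(4) by auto
  have pos: "(\<forall>i\<in>set (map g w). 0 < i) \<longleftrightarrow> (\<forall>i\<in>set w. 0 < i)"
    using less_iff[OF assms(3)] assms(2,4) by auto
  have decreasing: "(\<forall>j. Suc j \<le> m \<longrightarrow> map g w ! j > map g w ! Suc j) \<longleftrightarrow>
      (\<forall>j. Suc j \<le> m \<longrightarrow> w ! j > w ! Suc j)" if "m < length w" for m
    using that less_iff nth_in by auto
  have increasing: "(\<forall>j. m \<le> j \<and> Suc j < length w \<longrightarrow> map g w ! j < map g w ! Suc j) \<longleftrightarrow>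
      (\<forall>j. m \<le> j \<and> Suc j < length w \<longrightarrow> w ! j < w ! Suc j)" for m
    using less_iff nth_in by auto
  have "(\<exists>m<length w. (\<forall>j. Suc j \<le> m \<longrightarrow> map g w ! j > map g w ! Suc j) \<and>
      (\<forall>j. m \<le> j \<and> Suc j < length w \<longrightarrow> map g w ! j < map g w ! Suc j)) \<longleftrightarrow>
    (\<exists>m<length w. (\<forall>j. Suc j \<le> m \<longrightarrow> w ! j > w ! Suc j) \<and>
      (\<forall>j. m \<le> j \<and> Suc j < length w \<longrightarrow> w ! j < w ! Suc j))"
    using decreasing increasing by blast
  then show ?thesis
    unfolding vword_def pos length_map Nil_is_map_conv by simp
qed

lemma path_to_vacuum_map_strict_mono:
  assumes g: "strict_mono_on A g" and g0: "g 0 = 0" and "0 \<in> A"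
  shows "set u \<subseteq> A \<Longrightarrow> set xs \<subseteq> A \<Longrightarrow>
    path_to_vacuum (map g u) (map g xs) \<longleftrightarrow> path_to_vacuum u xs"
proof (induction xs arbitrary: u)
  case (Cons x xs)
  have x: "x \<in> A" using Cons.prems by auto
  have g_zero: "g x = 0 \<longleftrightarrow> x = 0"
    using strict_mono_on_less[OF g \<open>0 \<in> A\<close> x] g0 by (cases "x = 0") auto
  show ?case
  proof (cases "x = 0")
    case True
    have "set (tl u) \<subseteq> A" using Cons.prems by (cases u) auto
    then show ?thesis using True g0 Cons by (simp flip: map_tl)
  next
    case False
    have "vword (g x # map g u) \<longleftrightarrow> vword (x # u)"
      using vword_map_strict_mono[OF assms, of "x # u"] x Cons.prems by simp
    then show ?thesis using False g_zero Cons.IH[of "x # u"] x Cons.prems by simp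
  qed
qed simp

definition labelled_paths :: "nat \<Rightarrow> nat set \<Rightarrow> nat list set" where
  "labelled_paths k S = {xs. length xs = 2 * k \<and> path_to_vacuum [] xs \<and>
     distinct (labels xs) \<and> set (labels xs) = S}"

lemma finite_labelled_paths:
  assumes "finite S"
  shows "finite (labelled_paths k S)"
proof (rule finite_subset)
  show "labelled_paths k S \<subseteq> {xs. set xs \<subseteq> insert 0 S \<and> length xs = 2 * k}"
    using set_subset_labels by (fastforce simp: labelled_paths_def)
qed (simp add: assms finite_lists_length_eq)

text \<open>Being a V-word only depends on the relative order of the letters.\<close>

lemma card_labelled_paths_le:
  assumes g: "strict_mono_on (insert 0 S) g" and g0: "g 0 = 0" and "finite S"
  shows "card (labelled_paths k S) \<le> card (labelled_paths k (g ` S))"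
proof (rule card_inj_on_le)
  have inj: "inj_on g (insert 0 S)" using g by (rule strict_mono_on_imp_inj_on)
  have sub: "xs \<in> labelled_paths k S \<Longrightarrow> set xs \<subseteq> insert 0 S" for xs
    using set_subset_labels[of xs] by (auto simp: labelled_paths_def)
  show "inj_on (map g) (labelled_paths k S)"
    using map_inj_on inj_on_subset[OF inj] sub by (metis (no_types, lifting) inj_onI le_sup_iff)
  show "map g ` labelled_paths k S \<subseteq> labelled_paths k (g ` S)"
  proof clarify
    fix xs assume xs: "xs \<in> labelled_paths k S"
    have pos: "\<forall>x\<in>set xs. 0 < g x \<longleftrightarrow> 0 < x"
      using sub[OF xs] strict_mono_on_less[OF g, of 0] g0 by fastforce
    have "path_to_vacuum (map g []) (map g xs) \<longleftrightarrow> path_to_vacuum [] xs"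
      using sub[OF xs] by (intro path_to_vacuum_map_strict_mono[OF g g0]) auto
    moreover have "inj_on g (set (labels xs))"
      using xs inj_on_subset[OF inj] by (auto simp: labelled_paths_def)
    ultimately show "map g xs \<in> labelled_paths k (g ` S)"
      using xs by (auto simp: labelled_paths_def labels_map[OF pos] distinct_map)
  qed
  show "finite (labelled_paths k (g ` S))" by (simp add: assms finite_labelled_paths)
qed

lemma rank_strict_mono_on:
  fixes S :: "nat set"
  assumes "finite S" "0 \<notin> S"
  defines "h \<equiv> \<lambda>x. card {y \<in> S. y \<le> x}"
  shows "strict_mono_on (insert 0 S) h" "h 0 = 0" "h ` S = {1..card S}"
proof -
  have "{y \<in> S. y \<le> 0} = {}" using assms(2) by auto
  then show h0: "h 0 = 0" by (simp add: h_def)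
  show mono: "strict_mono_on (insert 0 S) h"
  proof (rule strict_mono_onI)
    fix r s assume "r \<in> insert 0 S" "s \<in> insert 0 S" "r < s"
    then have "s \<in> {y \<in> S. y \<le> s}" "s \<notin> {y \<in> S. y \<le> r}" by auto
    moreover have "{y \<in> S. y \<le> r} \<subseteq> {y \<in> S. y \<le> s}" using \<open>r < s\<close> by auto
    ultimately have "{y \<in> S. y \<le> r} \<subset> {y \<in> S. y \<le> s}" by blast
    then show "h r < h s" unfolding h_def by (rule psubset_card_mono[rotated]) (simp add: assms)
  qed
  have "h ` S \<subseteq> {1..card S}"
  proof (rule image_subsetI)
    fix x assume "x \<in> S"
    moreover have "0 < x" using \<open>x \<in> S\<close> assms(2) by (metis gr0I)
    ultimately have "0 < h x" using strict_mono_on_less[OF mono, of 0 x] h0 by simp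
    moreover have "h x \<le> card S" unfolding h_def by (rule card_mono) (auto simp: assms(1))
    ultimately show "h x \<in> {1..card S}" by simp
  qed
  moreover have "card (h ` S) = card S"
    using inj_on_subset[OF strict_mono_on_imp_inj_on[OF mono]] by (auto intro: card_image)
  ultimately show "h ` S = {1..card S}" by (intro card_subset_eq) auto
qed

lemma enumerate_strict_mono_on:
  fixes S :: "nat set"
  assumes "finite S" "0 \<notin> S"
  defines "g \<equiv> \<lambda>i. if i = 0 then 0 else sorted_list_of_set S ! (i - 1)"
  shows "strict_mono_on (insert 0 {1..card S}) g" "g 0 = 0" "g ` {1..card S} = S"
proof -
  let ?L = "sorted_list_of_set S"
  have L: "sorted_wrt (<) ?L" "set ?L = S" "length ?L = card S"
    using assms by (auto simp: strict_sorted_list_of_set)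
  have pos: "g i \<in> S \<and> 0 < g i" if "i \<in> {1..card S}" for i
  proof -
    have "i - 1 < length ?L" using that L(3) by auto
    then have "?L ! (i - 1) \<in> S" using L(2) nth_mem by blast
    moreover have "i \<noteq> 0" using that by simp
    ultimately show ?thesis using assms(2) by (metis g_def gr0I)
  qed
  show "g 0 = 0" by (simp add: g_def)
  show "strict_mono_on (insert 0 {1..card S}) g"
  proof (rule strict_mono_onI)
    fix r s assume "r \<in> insert 0 {1..card S}" "s \<in> insert 0 {1..card S}" "r < s"
    then show "g r < g s"
      using pos[of s] sorted_wrt_nth_less[OF L(1), of "r - 1" "s - 1"] L(3)
      by (cases "r = 0") (auto simp: g_def)
  qed
  show "g ` {1..card S} = S"
  proof
    show "S \<subseteq> g ` {1..card S}"
    proof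
      fix x assume "x \<in> S"
      then obtain i where "i < card S" "?L ! i = x" using L(2,3) by (metis in_set_conv_nth)
      then show "x \<in> g ` {1..card S}" by (intro image_eqI[of _ _ "Suc i"]) (auto simp: g_def)
    qed
  qed (use pos in auto)
qed

lemma card_labelled_paths:
  assumes "finite S" "0 \<notin> S"
  shows "card (labelled_paths k S) = card (labelled_paths k {1..card S})"
proof (rule antisym)
  obtain h where "strict_mono_on (insert 0 S) h" "h 0 = 0" "h ` S = {1..card S}"
    using rank_strict_mono_on[OF assms] by blast
  then show "card (labelled_paths k S) \<le> card (labelled_paths k {1..card S})"
    using card_labelled_paths_le[OF _ _ assms(1)] by metis
  obtain g where "strict_mono_on (insert 0 {1..card S}) g" "g 0 = 0" "g ` {1..card S} = S"
    using enumerate_strict_mono_on[OF assms] by blast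
  then show "card (labelled_paths k {1..card S}) \<le> card (labelled_paths k S)"
    using card_labelled_paths_le[of "{1..card S}" g k] by auto
qed

lemma card_distinct_paths:
  "card {xs \<in> paths N (2 * k) []. distinct (labels xs)} =
     (N choose k) * card (labelled_paths k {1..k})"
proof -
  let ?SS = "{S. S \<subseteq> {1..N} \<and> card S = k}"
  have "{xs \<in> paths N (2 * k) []. distinct (labels xs)} = (\<Union>S\<in>?SS. labelled_paths k S)"
  proof (intro equalityI subsetI)
    fix xs assume xs: "xs \<in> {xs \<in> paths N (2 * k) []. distinct (labels xs)}"
    then have "set (labels xs) \<subseteq> {1..N}" by (auto simp: paths_def labels_def)
    moreover have "card (set (labels xs)) = k"
      using xs length_labels_paths distinct_card by auto
    ultimately have "set (labels xs) \<in> ?SS" by simp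
    then show "xs \<in> (\<Union>S\<in>?SS. labelled_paths k S)"
      using xs by (auto simp: labelled_paths_def paths_def)
  next
    fix xs assume "xs \<in> (\<Union>S\<in>?SS. labelled_paths k S)"
    then show "xs \<in> {xs \<in> paths N (2 * k) []. distinct (labels xs)}"
      using set_subset_labels[of xs] by (fastforce simp: labelled_paths_def paths_def)
  qed
  also have "card \<dots> = (\<Sum>S\<in>?SS. card (labelled_paths k S))"
  proof (rule card_UN_disjoint)
    show "\<forall>S\<in>?SS. finite (labelled_paths k S)"
      using finite_labelled_paths finite_subset[of _ "{1..N}"] by blast
  qed (auto simp: labelled_paths_def)
  also have "\<dots> = (\<Sum>S\<in>?SS. card (labelled_paths k {1..k}))"
  proof (rule sum.cong)
    fix S assume "S \<in> ?SS"
    then show "card (labelled_paths k S) = card (labelled_paths k {1..k})"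
      using card_labelled_paths[of S k] finite_subset[of S "{1..N}"] by fastforce
  qed simp
  also have "\<dots> = (N choose k) * card (labelled_paths k {1..k})"
    using n_subsets[of "{1..N}" k] by simp
  finally show ?thesis .
qed

lemma card_distinct_lists:
  assumes "k \<le> N"
  shows "card {xs. length xs = k \<and> distinct xs \<and> set xs \<subseteq> {1..N}} = fact k * (N choose k)"
proof -
  have "card {xs. length xs = k \<and> distinct xs \<and> set xs \<subseteq> {1..N}} = fact N div fact (N - k)"
    using card_lists_distinct_length_eq[of "{1..N}" k] fact_div_fact[of "N - k" N] assms by simp
  also have "fact N = fact k * (N choose k) * fact (N - k)"
    using binomial_fact_lemma[OF assms] by (simp add: mult_ac)
  finally show ?thesis by simp
qed

lemma fact_mult_binomial_le_power: "fact k * (N choose k) \<le> N ^ k"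
proof (cases "k \<le> N")
  case True
  have "card {xs. length xs = k \<and> distinct xs \<and> set xs \<subseteq> {1..N}} \<le>
      card {xs. set xs \<subseteq> {1..N} \<and> length xs = k}"
    by (rule card_mono[OF finite_lists_length_eq]) auto
  then show ?thesis using card_distinct_lists[OF True] by (simp add: card_lists_length_eq)
qed (simp add: binomial_eq_0)

lemma card_nondistinct_lists:
  assumes "k \<le> N"
  shows "card {xs. set xs \<subseteq> {1..N} \<and> length xs = k \<and> \<not> distinct xs} = N ^ k - fact k * (N choose k)"
proof -
  let ?all = "{xs. set xs \<subseteq> {1..N} \<and> length xs = k}"
  let ?dist = "{xs. length xs = k \<and> distinct xs \<and> set xs \<subseteq> {1..N}}"
  have "{xs. set xs \<subseteq> {1..N} \<and> length xs = k \<and> \<not> distinct xs} = ?all - ?dist" by auto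
  moreover have "card (?all - ?dist) = card ?all - card ?dist"
    by (rule card_Diff_subset) (auto intro: finite_subset[OF _ finite_lists_length_eq])
  ultimately show ?thesis
    using card_distinct_lists[OF assms] card_lists_length_eq[of "{1..N}" k] by simp
qed

text \<open>A path is determined by its pattern of nonzero letters together with its labels.\<close>

lemma card_nondistinct_paths_le:
  assumes "k \<le> N"
  shows "card {xs \<in> paths N (2 * k) []. \<not> distinct (labels xs)} \<le>
    2 ^ (2 * k) * (N ^ k - fact k * (N choose k))"
proof -
  let ?A = "{bs :: bool list. set bs \<subseteq> UNIV \<and> length bs = 2 * k}"
  let ?B = "{xs. set xs \<subseteq> {1..N} \<and> length xs = k \<and> \<not> distinct xs}"
  have "card {xs \<in> paths N (2 * k) []. \<not> distinct (labels xs)} \<le> card (?A \<times> ?B)"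
  proof (rule card_inj_on_le)
    show "inj_on (\<lambda>xs. (map (\<lambda>x. 0 < x) xs, labels xs)) {xs \<in> paths N (2 * k) []. \<not> distinct (labels xs)}"
      by (rule inj_onI) (auto intro: eq_by_signs_and_labels)
    show "(\<lambda>xs. (map (\<lambda>x. 0 < x) xs, labels xs)) ` {xs \<in> paths N (2 * k) []. \<not> distinct (labels xs)} \<subseteq> ?A \<times> ?B"
      using length_labels_paths by (auto simp: paths_def labels_def)
    have "finite ?A" using finite_lists_length_eq[of "UNIV :: bool set" "2 * k"] by simp
    moreover have "finite ?B"
      by (rule finite_subset[OF _ finite_lists_length_eq[of "{1..N}" k]]) auto
    ultimately show "finite (?A \<times> ?B)" by simp
  qed
  also have "\<dots> = 2 ^ (2 * k) * (N ^ k - fact k * (N choose k))"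
    using card_lists_length_eq[of "UNIV :: bool set" "2 * k"] card_nondistinct_lists[OF assms]
    by (simp add: card_cartesian_product)
  finally show ?thesis .
qed

lemma binomial_over_power_tendsto:
  "(\<lambda>N. real (N choose k) / real N ^ k) \<longlonglongrightarrow> 1 / fact k"
proof -
  have eq: "real (N choose k) / real N ^ k = (\<Prod>i<k. 1 - real i / real N) / fact k" if "N > 0" for N
  proof -
    have "real (N choose k) * fact k = (\<Prod>i<k. real N - real i)"
      using gbinomial_mult_fact'[of "real N" k] by (simp add: binomial_gbinomial lessThan_atLeast0)
    also have "\<dots> = (\<Prod>i<k. (1 - real i / real N) * real N)"
      using that by (intro prod.cong) (auto simp: field_simps)
    also have "\<dots> = (\<Prod>i<k. 1 - real i / real N) * real N ^ k"
      by (simp add: prod.distrib)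
    finally show ?thesis using that by (simp add: field_simps)
  qed
  have "(\<lambda>N. (\<Prod>i<k. 1 - real i / real N) / fact k) \<longlonglongrightarrow> (\<Prod>i<k. 1 - 0) / fact k"
    by (intro tendsto_intros) auto
  then have "(\<lambda>N. (\<Prod>i<k. 1 - real i / real N) / fact k) \<longlonglongrightarrow> 1 / fact k" by simp
  then show ?thesis
    by (rule Lim_transform_eventually) (auto intro!: eventually_sequentiallyI[of 1] simp: eq)
qed

lemma vac_omegaN_power_even_split:
  "vac (omegaN N ^^ (2 * k)) =
     real (N choose k) / real N ^ k * real (card (labelled_paths k {1..k})) +
     real (card {xs \<in> paths N (2 * k) []. \<not> distinct (labels xs)}) / real N ^ k"
proof -
  have "paths N (2 * k) [] = {xs \<in> paths N (2 * k) []. distinct (labels xs)} \<union>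
      {xs \<in> paths N (2 * k) []. \<not> distinct (labels xs)}" by auto
  then have "card (paths N (2 * k) []) = card {xs \<in> paths N (2 * k) []. distinct (labels xs)} +
      card {xs \<in> paths N (2 * k) []. \<not> distinct (labels xs)}"
    by (metis (no_types, lifting) card_Un_disjoint disjoint_iff finite_Un mem_Collect_eq finite_paths)
  then show ?thesis
    by (simp add: vac_omegaN_power_even card_distinct_paths add_divide_distrib)
qed

lemma nondistinct_paths_negligible:
  "(\<lambda>N. real (card {xs \<in> paths N (2 * k) []. \<not> distinct (labels xs)}) / real N ^ k) \<longlonglongrightarrow> 0"
proof (rule real_tendsto_sandwich)
  let ?R = "\<lambda>N. real (card {xs \<in> paths N (2 * k) []. \<not> distinct (labels xs)}) / real N ^ k"
  let ?b = "\<lambda>N. real (N choose k) / real N ^ k"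
  show "eventually (\<lambda>N. 0 \<le> ?R N) sequentially" by simp
  show "eventually (\<lambda>N. ?R N \<le> 2 ^ (2 * k) * (1 - fact k * ?b N)) sequentially"
  proof (rule eventually_sequentiallyI[of "Suc k"])
    fix N assume N: "Suc k \<le> N"
    have "real (card {xs \<in> paths N (2 * k) []. \<not> distinct (labels xs)}) \<le>
        real (2 ^ (2 * k) * (N ^ k - fact k * (N choose k)))"
      using card_nondistinct_paths_le[of k N] N by (intro of_nat_mono) simp
    also have "\<dots> = 2 ^ (2 * k) * (real (N ^ k) - real (fact k * (N choose k)))"
      using fact_mult_binomial_le_power[of k N] by (simp add: of_nat_diff)
    finally have "?R N \<le> 2 ^ (2 * k) * (real (N ^ k) - real (fact k * (N choose k))) / real N ^ k"
      by (simp add: divide_right_mono)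
    also have "\<dots> = 2 ^ (2 * k) * (1 - fact k * ?b N)"
      using N by (simp add: field_simps)
    finally show "?R N \<le> 2 ^ (2 * k) * (1 - fact k * ?b N)" .
  qed
  have "(\<lambda>N. 2 ^ (2 * k) * (1 - fact k * ?b N)) \<longlonglongrightarrow> 2 ^ (2 * k) * (1 - fact k * (1 / fact k :: real))"
    by (intro tendsto_intros binomial_over_power_tendsto)
  then show "(\<lambda>N. 2 ^ (2 * k) * (1 - fact k * ?b N)) \<longlonglongrightarrow> (0 :: real)" by simp
qed simp

lemma vac_omegaN_power_even_tendsto:
  "(\<lambda>N. vac (omegaN N ^^ (2 * k))) \<longlonglongrightarrow> real (card (labelled_paths k {1..k})) / fact k"
proof -
  have "(\<lambda>N. real (N choose k) / real N ^ k * real (card (labelled_paths k {1..k})) +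
      real (card {xs \<in> paths N (2 * k) []. \<not> distinct (labels xs)}) / real N ^ k)
    \<longlonglongrightarrow> 1 / fact k * real (card (labelled_paths k {1..k})) + 0"
    by (intro tendsto_intros binomial_over_power_tendsto nondistinct_paths_negligible)
  then show ?thesis unfolding vac_omegaN_power_even_split by simp
qed

section \<open>The stack and the matching of a balanced word\<close>

text \<open>Positions are counted from 1, as in the pair partitions of \<open>[2k]\<close>: \<open>stack ws t\<close> lists,
  latest first, the positions among the first \<open>t\<close> letters holding a label that has not yet been
  cancelled by a later \<open>0\<close>.  Along a path these labels form the current basis word.\<close>

fun stack :: "nat list \<Rightarrow> nat \<Rightarrow> nat list" where
  "stack ws 0 = []"
| "stack ws (Suc t) = (if 0 < ws ! t then Suc t # stack ws t else tl (stack ws t))"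

definition label_at :: "nat list \<Rightarrow> nat \<Rightarrow> nat" where
  "label_at ws p = ws ! (p - 1)"

definition balanced :: "nat list \<Rightarrow> bool" where
  "balanced ws \<longleftrightarrow> (\<forall>t<length ws. ws ! t = 0 \<longrightarrow> stack ws t \<noteq> []) \<and> stack ws (length ws) = []"

definition admissible :: "nat list \<Rightarrow> bool" where
  "admissible ws \<longleftrightarrow> balanced ws \<and> (\<forall>t<length ws. 0 < ws ! t \<longrightarrow> vword (map (label_at ws) (stack ws (Suc t))))"

lemma in_set_tlD: "x \<in> set (tl xs) \<Longrightarrow> x \<in> set xs"
  by (cases xs) auto

lemma stack_memD: "x \<in> set (stack ws t) \<Longrightarrow> 1 \<le> x \<and> x \<le> t \<and> 0 < ws ! (x - 1)"
  by (induction t) (auto split: if_splits dest: in_set_tlD)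

lemma sorted_stack: "sorted_wrt (>) (stack ws t)"
proof (induction t)
  case 0 then show ?case by simp
next
  case (Suc t)
  then show ?case using stack_memD[of _ ws t]
    by (cases "stack ws t") (auto simp: less_Suc_eq_le)
qed

lemma distinct_stack: "distinct (stack ws t)"
  using sorted_stack[of ws t]
    by (simp add: sorted_wrt_iff_nth_less distinct_conv_nth) (metis less_irrefl nat_neq_iff)

lemma stack_Cons_less: "stack ws t = a # r \<Longrightarrow> y \<in> set r \<Longrightarrow> y < a"
  using sorted_stack[of ws t] by auto

lemma stack_le_hd: "y \<in> set (stack ws t) \<Longrightarrow> y \<le> hd (stack ws t)"
  using sorted_stack[of ws t] by (cases "stack ws t") auto

lemma stack_eq_Cons_Max:
  assumes "x \<in> set (stack ws t)" "\<forall>y\<in>set (stack ws t). y \<le> x"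
  shows "stack ws t = x # tl (stack ws t)"
proof -
  have ne: "stack ws t \<noteq> []" using assms(1) by auto
  then have "hd (stack ws t) = x"
    using assms stack_le_hd[OF assms(1)] by (metis antisym list.set_sel(1))
  then show ?thesis using ne by (metis list.collapse)
qed

lemma stack_mem_earlier: "x \<in> set (stack ws t') \<Longrightarrow> x \<le> t \<Longrightarrow> t \<le> t' \<Longrightarrow> x \<in> set (stack ws t)"
proof (induction t' arbitrary: t)
  case 0 then show ?case by simp
next
  case (Suc t')
  show ?case
  proof (cases "t = Suc t'")
    case True then show ?thesis using Suc by simp
  next
    case False
    then have "t \<le> t'" using Suc by simp
    have "x \<in> set (stack ws t')"
      using Suc.prems \<open>t \<le> t'\<close> by (auto split: if_splits dest: in_set_tlD)
    then show ?thesis using Suc.IH \<open>t \<le> t'\<close> Suc.prems by blast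
  qed
qed

lemma filter_le_stack_eq: "t \<le> t' \<Longrightarrow> x \<in> set (stack ws t) \<Longrightarrow> x \<in> set (stack ws t') \<Longrightarrow>
   filter (\<lambda>y. y \<le> x) (stack ws t') = filter (\<lambda>y. y \<le> x) (stack ws t)"
proof (induction t' rule: dec_induct)
  case base then show ?case by simp
next
  case (step u)
  have xu: "x \<in> set (stack ws u)"
    using stack_mem_earlier[OF step.prems(2)] step.hyps stack_memD[OF step.prems(1)] by simp
  have xle: "x \<le> u" using stack_memD[OF xu] by simp
  show ?case
  proof (cases "0 < ws ! u")
    case True
    then show ?thesis using step.IH[OF step.prems(1) xu] xle by simp
  next
    case False
    then have e: "stack ws (Suc u) = tl (stack ws u)" by simp
    obtain a r where ar: "stack ws u = a # r" using xu by (cases "stack ws u") auto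
    have "x \<in> set r" using step.prems e ar by simp
    then have "x < a" using stack_Cons_less[OF ar] by simp
    then show ?thesis using step.IH[OF step.prems(1) xu] e ar by simp
  qed
qed

lemma path_to_vacuum_stack_iff:
  "m \<le> length ws \<Longrightarrow> path_to_vacuum (map (label_at ws) (stack ws m)) (drop m ws) \<longleftrightarrow>
    (\<forall>t. m \<le> t \<and> t < length ws \<longrightarrow> (ws ! t = 0 \<longrightarrow> stack ws t \<noteq> []) \<and>
        (0 < ws ! t \<longrightarrow> vword (map (label_at ws) (stack ws (Suc t))))) \<and> stack ws (length ws) = []"
proof (induction "length ws - m" arbitrary: m)
  case 0
  then have "m = length ws" by simp
  then show ?case by auto
next
  case (Suc d)
  then have m: "m < length ws" by simp
  have IH: "path_to_vacuum (map (label_at ws) (stack ws (Suc m))) (drop (Suc m) ws) \<longleftrightarrow>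
    (\<forall>t. Suc m \<le> t \<and> t < length ws \<longrightarrow> (ws ! t = 0 \<longrightarrow> stack ws t \<noteq> []) \<and>
        (0 < ws ! t \<longrightarrow> vword (map (label_at ws) (stack ws (Suc t))))) \<and> stack ws (length ws) = []"
    by (rule Suc.hyps(1)) (use Suc.hyps(2) m in auto)
  have dr: "drop m ws = ws ! m # drop (Suc m) ws" using m by (simp add: Cons_nth_drop_Suc)
  have split: "(\<forall>t. m \<le> t \<and> t < length ws \<longrightarrow> Q t) \<longleftrightarrow> Q m \<and> (\<forall>t. Suc m \<le> t \<and> t < length ws \<longrightarrow> Q t)" for Q
    using m by (metis Suc_le_eq le_eq_less_or_eq)
  show ?case
  proof (cases "ws ! m = 0")
    case True
    then show ?thesis unfolding dr split using IH by (simp add: map_tl)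
  next
    case False
    have "map (label_at ws) (stack ws (Suc m)) = ws ! m # map (label_at ws) (stack ws m)"
      using False by (simp add: label_at_def)
    then show ?thesis unfolding dr split using IH False by simp
  qed
qed

lemma path_to_vacuum_iff_admissible: "path_to_vacuum [] ws \<longleftrightarrow> admissible ws"
  using path_to_vacuum_stack_iff[of 0 ws] by (auto simp: admissible_def balanced_def)

lemma mem_MinMax_iff: "B = {Min B, Max B} \<Longrightarrow> x \<in> B \<longleftrightarrow> x = Min B \<or> x = Max B"
  by (metis insert_iff singleton_iff)

definition matching :: "nat list \<Rightarrow> nat set set" where
  "matching ws = {{hd (stack ws t), Suc t} | t. t < length ws \<and> ws ! t = 0}"

lemma ex_last_step: "a \<le> b \<Longrightarrow> P (a::nat) \<Longrightarrow> \<not> P b \<Longrightarrow> \<exists>t. a \<le> t \<and> t < b \<and> P t \<and> \<not> P (Suc t)"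
proof (induction b rule: dec_induct)
  case base then show ?case by simp
next
  case (step n)
  then show ?case by (cases "P n") (auto intro: le_SucI)
qed

lemma stack_push: "0 < ws ! (s - 1) \<Longrightarrow> 1 \<le> s \<Longrightarrow> stack ws s = s # stack ws (s - 1)"
  by (cases s) auto

context
  fixes ws :: "nat list"
  assumes dy: "balanced ws"
begin

lemma closer_stack_top:
  assumes "t < length ws" "ws ! t = 0"
  shows "stack ws t \<noteq> []" "hd (stack ws t) \<in> set (stack ws t)" "hd (stack ws t) \<le> t"
    "1 \<le> hd (stack ws t)" "0 < ws ! (hd (stack ws t) - 1)"
proof -
  show ne: "stack ws t \<noteq> []" using dy assms by (auto simp: balanced_def)
  show h: "hd (stack ws t) \<in> set (stack ws t)" using ne by simp
  show "hd (stack ws t) \<le> t" "1 \<le> hd (stack ws t)" "0 < ws ! (hd (stack ws t) - 1)"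
    using stack_memD[OF h] by auto
qed

lemma closed_not_in_stack:
  assumes "t < length ws" "ws ! t = 0" "t < t'"
  shows "hd (stack ws t) \<notin> set (stack ws t')"
proof
  let ?q = "hd (stack ws t)"
  assume a: "?q \<in> set (stack ws t')"
  have "?q \<le> Suc t" using closer_stack_top(3)[OF assms(1,2)] by simp
  then have "?q \<in> set (stack ws (Suc t))" using stack_mem_earlier[OF a, of "Suc t"] assms by simp
  moreover have "stack ws (Suc t) = tl (stack ws t)" using assms by simp
  moreover obtain r where "stack ws t = ?q # r"
    using closer_stack_top(1)[OF assms(1,2)] by (cases "stack ws t") auto
  ultimately show False using distinct_stack[of ws t] by (metis distinct.simps(2) list.sel(3))
qed

lemma opener_in_stack_iff:
  assumes "t0 < length ws" "ws ! t0 = 0"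
  shows "hd (stack ws t0) \<in> set (stack ws t) \<longleftrightarrow> hd (stack ws t0) \<le> t \<and> t < Suc t0"
proof
  assume a: "hd (stack ws t0) \<in> set (stack ws t)"
  have "\<not> t0 < t" using closed_not_in_stack[OF assms, of t] a by blast
  then show "hd (stack ws t0) \<le> t \<and> t < Suc t0"
    using stack_memD[OF a] by linarith
next
  assume "hd (stack ws t0) \<le> t \<and> t < Suc t0"
  then show "hd (stack ws t0) \<in> set (stack ws t)"
    using stack_mem_earlier[OF closer_stack_top(2)[OF assms]] by simp
qed

lemma matchingE:
  assumes "B \<in> matching ws"
  obtains t where "t < length ws" "ws ! t = 0" "B = {Min B, Max B}" "Min B = hd (stack ws t)"
    "Max B = Suc t" "Min B < Max B"
proof -
  obtain t where t: "t < length ws" "ws ! t = 0" "B = {hd (stack ws t), Suc t}"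
    using assms by (auto simp: matching_def)
  have le: "hd (stack ws t) < Suc t" using closer_stack_top(3)[OF t(1,2)] by simp
  then have "Min B = hd (stack ws t)" "Max B = Suc t" using t(3) by auto
  then show ?thesis using that t le by auto
qed

lemma matching_blockD:
  assumes "B \<in> matching ws"
  shows "B = {Min B, Max B}" "Min B < Max B" "1 \<le> Min B" "Max B \<le> length ws"
    "0 < ws ! (Min B - 1)" "ws ! (Max B - 1) = 0" "hd (stack ws (Max B - 1)) = Min B"
    "\<And>t. Min B \<in> set (stack ws t) \<longleftrightarrow> Min B \<le> t \<and> t < Max B"
    "Min B \<in> set (stack ws (Min B))"
proof -
  obtain t where t: "t < length ws" "ws ! t = 0" "B = {Min B, Max B}" "Min B = hd (stack ws t)"
    "Max B = Suc t" "Min B < Max B" using matchingE[OF assms] .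
  show "B = {Min B, Max B}" "Min B < Max B" "Max B \<le> length ws" "ws ! (Max B - 1) = 0"
    "hd (stack ws (Max B - 1)) = Min B" using t by auto
  show "1 \<le> Min B" "0 < ws ! (Min B - 1)" using closer_stack_top[OF t(1,2)] t by auto
  show "\<And>t'. Min B \<in> set (stack ws t') \<longleftrightarrow> Min B \<le> t' \<and> t' < Max B"
    using opener_in_stack_iff[OF t(1,2)] t by simp
  then show "Min B \<in> set (stack ws (Min B))" using t by simp
qed

lemma opener_matching_block:
  assumes "1 \<le> s" "s \<le> length ws" "0 < ws ! (s - 1)"
  shows "\<exists>B\<in>matching ws. Min B = s"
proof -
  have "s \<in> set (stack ws s)" using stack_push[OF assms(3,1)] by simp
  moreover have "s \<notin> set (stack ws (length ws))" using dy by (simp add: balanced_def)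
  ultimately obtain t where t: "s \<le> t" "t < length ws" "s \<in> set (stack ws t)" "s \<notin> set (stack ws (Suc t))"
    using ex_last_step[of s "length ws" "\<lambda>t. s \<in> set (stack ws t)"] assms by blast
  have w: "ws ! t = 0" using t by (auto split: if_splits)
  then have "stack ws (Suc t) = tl (stack ws t)" by simp
  then have "hd (stack ws t) = s" using t(3,4) by (cases "stack ws t") auto
  moreover have "{hd (stack ws t), Suc t} \<in> matching ws" using t w by (auto simp: matching_def)
  moreover have "Min {hd (stack ws t), Suc t} = hd (stack ws t)"
    using closer_stack_top(3)[OF t(2) w] by simp
  ultimately show ?thesis by metis
qed

lemma matching_eq_by_Min:
  assumes "B \<in> matching ws" "C \<in> matching ws" "Min B = Min C"
  shows "B = C"
proof -
  have "Max B = Max C"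
  proof (rule ccontr)
    assume "Max B \<noteq> Max C"
    then consider "Max B < Max C" | "Max C < Max B" by linarith
    then show False
    proof cases
      case 1
      then have "Min C \<in> set (stack ws (Max B))"
        using matching_blockD(2,8)[OF assms(2)] matching_blockD(2)[OF assms(1)] assms(3) by simp
      then show False using matching_blockD(8)[OF assms(1), of "Max B"] assms(3) by simp
    next
      case 2
      then have "Min B \<in> set (stack ws (Max C))"
        using matching_blockD(2,8)[OF assms(1)] matching_blockD(2)[OF assms(2)] assms(3) by simp
      then show False using matching_blockD(8)[OF assms(2), of "Max C"] assms(3) by simp
    qed
  qed
  then show ?thesis
    using matching_blockD(1)[OF assms(1)] matching_blockD(1)[OF assms(2)] assms(3) by metis
qed

lemma matching_eq_by_Max:
  assumes "B \<in> matching ws" "C \<in> matching ws" "Max B = Max C"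
  shows "B = C"
  using matching_blockD(1,7)[OF assms(1)] matching_blockD(1,7)[OF assms(2)] assms(3) by metis

lemma pair_partition_matching: "pair_partition (length ws) (matching ws)"
  unfolding pair_partition_def
proof (intro conjI ballI partition_onI)
  show "\<Union>(matching ws) = {1..length ws}"
  proof
    show "\<Union>(matching ws) \<subseteq> {1..length ws}"
    proof
      fix x assume "x \<in> \<Union>(matching ws)"
      then obtain B where B: "B \<in> matching ws" "x \<in> B" by auto
      then show "x \<in> {1..length ws}"
        using mem_MinMax_iff[OF matching_blockD(1)[OF B(1)]] matching_blockD(2-4)[OF B(1)] B(2)
        by auto
    qed
    show "{1..length ws} \<subseteq> \<Union>(matching ws)"
    proof
      fix x assume x: "x \<in> {1..length ws}"
      show "x \<in> \<Union>(matching ws)"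
      proof (cases "ws ! (x - 1) = 0")
        case True
        then have "{hd (stack ws (x - 1)), Suc (x - 1)} \<in> matching ws"
          using x by (auto simp: matching_def)
        then show ?thesis using x by auto
      next
        case False
        then obtain B where "B \<in> matching ws" "Min B = x"
          using opener_matching_block[of x] x by auto
        then show ?thesis using matching_blockD(1)[of B] by (metis UnionI insertI1)
      qed
    qed
  qed
  show "disjnt p q" if "p \<in> matching ws" "q \<in> matching ws" "p \<noteq> q" for p q
  proof -
    have "Min p \<noteq> Min q" "Max p \<noteq> Max q" using matching_eq_by_Min matching_eq_by_Max that by blast+
    moreover have "Min p \<noteq> Max q" "Max p \<noteq> Min q"
      using matching_blockD(5,6)[OF that(1)] matching_blockD(5,6)[OF that(2)] by auto
    ultimately show ?thesis using matching_blockD(1)[OF that(1)] matching_blockD(1)[OF that(2)]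
      by (metis disjnt_insert1 disjnt_insert2 disjnt_empty1 insert_iff empty_iff)
  qed
  show "{} \<notin> matching ws" by (auto simp: matching_def)
  show "card B = 2" if "B \<in> matching ws" for B
    using matching_blockD(1,2)[OF that] by (metis card_2_iff less_irrefl)
qed

lemma noncrossing_matching: "noncrossing (matching ws)"
  unfolding noncrossing_def
proof (intro ballI notI)
  fix B C assume B: "B \<in> matching ws" and C: "C \<in> matching ws" and c: "Min B < Min C \<and> Min C < Max B \<and> Max B < Max C"
  have "Min C \<in> set (stack ws (Max B - 1))" using matching_blockD(8)[OF C, of "Max B - 1"] c by auto
  then have "Min C \<le> Min B" using stack_le_hd matching_blockD(7)[OF B] by metis
  then show False using c by simp
qed

lemma stack_top_outer:
  assumes B: "B \<in> matching ws" and ne: "stack ws (Min B - 1) \<noteq> []"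
  shows "\<exists>D\<in>matching ws. Min D = hd (stack ws (Min B - 1)) \<and> inside B D \<and>
           (\<forall>E\<in>matching ws. inside B E \<longrightarrow> Min E \<le> Min D)"
proof -
  let ?s = "Min B" and ?p = "hd (stack ws (Min B - 1))"
  have pin: "?p \<in> set (stack ws (?s - 1))" using ne by simp
  note pm = stack_memD[OF pin]
  have sB: "1 \<le> ?s" "?s < Max B" "Max B \<le> length ws" "0 < ws ! (?s - 1)"
    using matching_blockD[OF B] by auto
  obtain D where D: "D \<in> matching ws" "Min D = ?p"
    using opener_matching_block[of ?p] pm sB by force
  have "?s - 1 < Max D" using matching_blockD(8)[OF D(1), of "?s - 1"] pin D(2) by simp
  moreover have "Max D \<noteq> ?s" using matching_blockD(6)[OF D(1)] sB(4) by auto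
  ultimately have MD: "?s < Max D" by linarith
  have pD: "?p < ?s" using pm sB by linarith
  have "\<not> (Min D < Min B \<and> Min B < Max D \<and> Max D < Max B)"
    using noncrossing_matching D(1) B unfolding noncrossing_def by blast
  then have "Max D \<ge> Max B" using MD pD D(2) by linarith
  moreover have "Max D \<noteq> Max B" using matching_eq_by_Max[OF D(1) B] D(2) pD by auto
  ultimately have "Max B < Max D" by simp
  then have ins: "inside B D" using pD D(2) by (simp add: inside_def)
  have "Min E \<le> Min D" if E: "E \<in> matching ws" "inside B E" for E
  proof -
    have "Min E \<in> set (stack ws (?s - 1))"
      using matching_blockD(8)[OF E(1), of "?s - 1"] E(2) sB unfolding inside_def by auto
    then show ?thesis using stack_le_hd D(2) by metis
  qed
  then show ?thesis using D ins by blast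
qed

lemma outermost_or_nearest_outer:
  assumes B: "B \<in> matching ws"
  shows "stack ws (Min B) = [Min B] \<or> (\<exists>C. nearest_outer (matching ws) B C)"
proof (cases "stack ws (Min B - 1) = []")
  case True
  then show ?thesis using stack_push[of ws "Min B"] matching_blockD(3,5)[OF B] by simp
next
  case False
  obtain D where D: "D \<in> matching ws" "inside B D" "\<forall>E\<in>matching ws. inside B E \<longrightarrow> Min E \<le> Min D"
    using stack_top_outer[OF B False] by blast
  have "nearest_outer (matching ws) B D"
    unfolding nearest_outer_def using B D by (auto simp: inside_def)
  then show ?thesis by blast
qed

lemma stack_nearest_outer:
  assumes no: "nearest_outer (matching ws) B C"
  shows "stack ws (Min B) = Min B # stack ws (Min C)"
proof -
  have B: "B \<in> matching ws" and C: "C \<in> matching ws" and ins: "inside B C"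
    and none: "\<not> (\<exists>D\<in>matching ws. inside B D \<and> inside D C)"
      using no by (auto simp: nearest_outer_def)
  let ?s = "Min B"
  have sB: "1 \<le> ?s" "?s < Max B" "0 < ws ! (?s - 1)" using matching_blockD[OF B] by auto
  have cin: "Min C \<in> set (stack ws (?s - 1))"
    using matching_blockD(8)[OF C, of "?s - 1"] ins sB unfolding inside_def by auto
  then have ne: "stack ws (?s - 1) \<noteq> []" by auto
  obtain D where D: "D \<in> matching ws" "Min D = hd (stack ws (?s - 1))" "inside B D"
    "\<forall>E\<in>matching ws. inside B E \<longrightarrow> Min E \<le> Min D"
    using stack_top_outer[OF B ne] by blast
  have le: "Min C \<le> Min D" using D(4) C ins by blast
  have eq: "Min C = Min D"
  proof (rule ccontr)
    assume "Min C \<noteq> Min D"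
    then have lt: "Min C < Min D" using le by simp
    have "Min D < Max C" using D(3) ins matching_blockD(2)[OF B] unfolding inside_def by linarith
    moreover have "\<not> (Min C < Min D \<and> Min D < Max C \<and> Max C < Max D)"
      using noncrossing_matching D(1) C unfolding noncrossing_def by blast
    moreover have "Max C \<noteq> Max D" using matching_eq_by_Max[OF C D(1)] lt by auto
    ultimately have "Max D < Max C" using lt by linarith
    then have "inside D C" using lt by (simp add: inside_def)
    then show False using none D(1,3) by blast
  qed
  have "stack ws (?s - 1) = filter (\<lambda>y. y \<le> Min C) (stack ws (?s - 1))"
    using stack_le_hd[of _ ws "?s - 1"] D(2) eq by (auto intro!: filter_True[symmetric])
  also have "\<dots> = filter (\<lambda>y. y \<le> Min C) (stack ws (Min C))"
    using filter_le_stack_eq[of "Min C" "?s - 1" "Min C" ws] matching_blockD(9)[OF C] cin stack_memD[OF cin]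
      by simp
  also have "\<dots> = stack ws (Min C)"
    using stack_memD[of _ ws "Min C"] by (auto intro!: filter_True)
  finally show ?thesis using stack_push[of ws ?s] sB by simp
qed

lemma outer_chain_stack_prefix:
  "Bs \<noteq> [] \<Longrightarrow> set Bs \<subseteq> matching ws \<Longrightarrow> successively (nearest_outer (matching ws)) Bs \<Longrightarrow>
    map Min Bs = take (length Bs) (stack ws (Min (hd Bs)))"
proof (induction Bs)
  case Nil then show ?case by simp
next
  case (Cons B Bs)
  show ?case
  proof (cases Bs)
    case Nil
    then show ?thesis using stack_push[of ws "Min B"] matching_blockD(3,5)[of B] Cons.prems by simp
  next
    case (Cons C Bs')
    then have "nearest_outer (matching ws) B C" "successively (nearest_outer (matching ws)) Bs"
      using Cons.prems(3) by simp_all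
    then show ?thesis using stack_nearest_outer Cons.IH Cons.prems \<open>Bs = C # Bs'\<close> by simp
  qed
qed

lemma stack_outer_chain:
  "B \<in> matching ws \<Longrightarrow> \<exists>Bs. Bs \<noteq> [] \<and> hd Bs = B \<and> set Bs \<subseteq> matching ws \<and> successively (nearest_outer (matching ws)) Bs \<and>
      map Min Bs = stack ws (Min B)"
proof (induction "Min B" arbitrary: B rule: less_induct)
  case less
  show ?case
  proof (cases "stack ws (Min B) = [Min B]")
    case True
    then show ?thesis using less.prems by (intro exI[of _ "[B]"]) auto
  next
    case False
    then obtain C where C: "nearest_outer (matching ws) B C"
      using outermost_or_nearest_outer[OF less.prems] by blast
    then have Cin: "C \<in> matching ws" and lt: "Min C < Min B"
      by (auto simp: nearest_outer_def inside_def)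
    obtain Bs where Bs: "Bs \<noteq> []" "hd Bs = C" "set Bs \<subseteq> matching ws" "successively (nearest_outer (matching ws)) Bs"
      "map Min Bs = stack ws (Min C)" using less.hyps[OF lt Cin] by blast
    obtain Bs' where Bs': "Bs = C # Bs'" using Bs(1,2) by (cases Bs) auto
    have "successively (nearest_outer (matching ws)) (B # Bs)" using C Bs(4) Bs' by simp
    then show ?thesis
      using Bs less.prems stack_nearest_outer[OF C] by (intro exI[of _ "B # Bs"]) auto
  qed
qed

end

section \<open>The word of a labelled pair partition\<close>

definition block_of :: "nat set set \<Rightarrow> nat \<Rightarrow> nat set" where
  "block_of P t = (THE B. B \<in> P \<and> t \<in> B)"

definition word_of :: "nat \<Rightarrow> nat set set \<Rightarrow> (nat set \<Rightarrow> nat) \<Rightarrow> nat list" where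
  "word_of n P f = map (\<lambda>t. if t = Min (block_of P t) then f (block_of P t) else 0) [1..<Suc n]"

context
  fixes n :: nat and P :: "nat set set"
  assumes pp: "pair_partition n P"
begin

lemma pair_blockD:
  assumes "B \<in> P"
  shows "B = {Min B, Max B}" "Min B < Max B" "1 \<le> Min B" "Max B \<le> n"
proof -
  have c: "card B = 2" using pp assms by (auto simp: pair_partition_def)
  then obtain x y where xy: "B = {x, y}" "x \<noteq> y" by (auto simp: card_2_iff)
  then show "B = {Min B, Max B}" "Min B < Max B" by (cases "x < y"; auto simp: min_def max_def)+
  have "B \<subseteq> {1..n}" using pp assms by (auto simp: pair_partition_def partition_on_def)
  then show "1 \<le> Min B" "Max B \<le> n" using xy by auto
qed

lemma pair_block_unique: "B \<in> P \<Longrightarrow> C \<in> P \<Longrightarrow> t \<in> B \<Longrightarrow> t \<in> C \<Longrightarrow> B = C"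
  using pp unfolding pair_partition_def partition_on_def pairwise_def disjnt_def by blast

lemma finite_pair_block: "B \<in> P \<Longrightarrow> finite B \<and> B \<noteq> {}"
  using pp by (auto simp: pair_partition_def intro: card_ge_0_finite)

lemma pair_block_Min_in: "B \<in> P \<Longrightarrow> Min B \<in> B"
  using finite_pair_block Min_in by blast

lemma pair_block_Max_in: "B \<in> P \<Longrightarrow> Max B \<in> B"
  using finite_pair_block Max_in by blast

lemma pair_block_mem: "B \<in> P \<Longrightarrow> x \<in> B \<longleftrightarrow> x = Min B \<or> x = Max B"
  using pair_blockD(1) by (rule mem_MinMax_iff)

lemma block_of_eq: "B \<in> P \<Longrightarrow> t \<in> B \<Longrightarrow> block_of P t = B"
  unfolding block_of_def
proof (rule the_equality)
  fix C assume "B \<in> P" "t \<in> B" "C \<in> P \<and> t \<in> C"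
  then show "C = B" using pair_block_unique[of C B t] by simp
qed simp

lemma block_of_in: "t \<in> {1..n} \<Longrightarrow> block_of P t \<in> P \<and> t \<in> block_of P t"
proof -
  assume "t \<in> {1..n}"
  then have "t \<in> \<Union>P" using pp by (simp add: pair_partition_def partition_on_def)
  then obtain B where "B \<in> P" "t \<in> B" by blast
  then show ?thesis using block_of_eq by simp
qed

lemma block_of_Min_or_Max: "t \<in> {1..n} \<Longrightarrow> t = Min (block_of P t) \<or> t = Max (block_of P t)"
  using block_of_in pair_block_mem by blast

text \<open>For the word of a labelled pair partition these are exactly the entries of its stack.\<close>

definition open_positions :: "nat \<Rightarrow> nat set" where
  "open_positions t = {Min B | B. B \<in> P \<and> Min B \<le> t \<and> t < Max B}"

lemma open_positions_iff:
  "x \<in> open_positions t \<longleftrightarrow> (\<exists>B. B \<in> P \<and> x = Min B \<and> Min B \<le> t \<and> t < Max B)"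
  unfolding open_positions_def by blast

lemma open_positions_0: "open_positions 0 = {}"
  unfolding open_positions_def by (auto dest: pair_blockD(3))

lemma open_positions_length: "open_positions n = {}"
  unfolding open_positions_def by (auto dest: pair_blockD(4))

lemma open_positions_Suc_opener:
  assumes "t < n" "Suc t = Min (block_of P (Suc t))"
  shows "open_positions (Suc t) = insert (Suc t) (open_positions t)"
proof (intro equalityI subsetI)
  let ?B = "block_of P (Suc t)"
  have B: "?B \<in> P" "Suc t \<in> ?B" using block_of_in[of "Suc t"] assms(1) by auto
  fix x
  assume "x \<in> open_positions (Suc t)"
  then obtain C where C: "C \<in> P" "x = Min C" "Min C \<le> Suc t" "Suc t < Max C"
    unfolding open_positions_iff by blast
  show "x \<in> insert (Suc t) (open_positions t)"
  proof (cases "Min C = Suc t")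
    case False
    then have "x \<in> open_positions t"
      unfolding open_positions_iff using C by (intro exI[of _ C]) auto
    then show ?thesis by simp
  qed (simp add: C(2))
next
  let ?B = "block_of P (Suc t)"
  have B: "?B \<in> P" "Suc t \<in> ?B" using block_of_in[of "Suc t"] assms(1) by auto
  fix x
  assume "x \<in> insert (Suc t) (open_positions t)"
  then consider "x = Suc t" | C where "C \<in> P" "x = Min C" "Min C \<le> t" "t < Max C"
    by (auto simp: open_positions_iff)
  then show "x \<in> open_positions (Suc t)"
  proof cases
    case 1
    then show ?thesis
      using B(1) assms(2) pair_blockD(2)[OF B(1)] unfolding open_positions_iff by (metis order.refl)
  next
    case 2
    have "Max C \<noteq> Suc t"
    proof
      assume "Max C = Suc t"
      then have "C = ?B"
        using pair_block_unique[OF 2(1) B(1)] pair_block_Max_in[OF 2(1)] B(2) by simp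
      then show False using 2 assms(2) by simp
    qed
    then show ?thesis unfolding open_positions_iff using 2 by (intro exI[of _ C]) simp
  qed
qed

lemma open_positions_Suc_closer:
  assumes "t < n" "Suc t = Max (block_of P (Suc t))"
  shows "open_positions (Suc t) = open_positions t - {Min (block_of P (Suc t))}"
proof (intro equalityI subsetI)
  let ?B = "block_of P (Suc t)"
  have B: "?B \<in> P" "Suc t \<in> ?B" using block_of_in[of "Suc t"] assms(1) by auto
  fix x
  assume "x \<in> open_positions (Suc t)"
  then obtain C where C: "C \<in> P" "x = Min C" "Min C \<le> Suc t" "Suc t < Max C"
    unfolding open_positions_iff by blast
  have "C \<noteq> ?B" using C(4) assms(2) by auto
  then have "Min C \<noteq> Suc t" "Min C \<noteq> Min ?B"
    using pair_block_unique[OF C(1) B(1)] pair_block_Min_in[OF C(1)] pair_block_Min_in[OF B(1)] B(2)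
    by metis+
  then have "x \<in> open_positions t"
    unfolding open_positions_iff using C by (intro exI[of _ C]) auto
  then show "x \<in> open_positions t - {Min ?B}" using C(2) \<open>Min C \<noteq> Min ?B\<close> by simp
next
  let ?B = "block_of P (Suc t)"
  have B: "?B \<in> P" "Suc t \<in> ?B" using block_of_in[of "Suc t"] assms(1) by auto
  fix x
  assume "x \<in> open_positions t - {Min ?B}"
  then obtain C where C: "C \<in> P" "x = Min C" "Min C \<le> t" "t < Max C" "C \<noteq> ?B"
    by (auto simp: open_positions_iff)
  then have "Max C \<noteq> Suc t"
    using pair_block_unique[OF C(1) B(1)] pair_block_Max_in[OF C(1)] B(2) by metis
  then show "x \<in> open_positions (Suc t)"
    unfolding open_positions_iff using C by (intro exI[of _ C]) auto
qed

text \<open>Non-crossing is what makes the block closed at \<open>Suc t\<close> the innermost open one.\<close>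

lemma open_positions_closer:
  assumes nc: "noncrossing P" and B: "B \<in> P" "Suc t = Max B"
  shows "Min B \<in> open_positions t" "x \<in> open_positions t \<Longrightarrow> x \<le> Min B"
proof -
  show "Min B \<in> open_positions t"
    using B pair_blockD(2)[OF B(1)] unfolding open_positions_iff by force
next
  assume "x \<in> open_positions t"
  then obtain C where C: "C \<in> P" "x = Min C" "Min C \<le> t" "t < Max C"
    unfolding open_positions_iff by blast
  show "x \<le> Min B"
  proof (rule ccontr)
    assume "\<not> x \<le> Min B"
    moreover have "Max C \<noteq> Suc t"
      using pair_block_unique[OF C(1) B(1)] pair_block_Max_in[OF C(1)] pair_block_Max_in[OF B(1)] B(2) C(2)
        calculation by fastforce
    ultimately show False
      using nc B C unfolding noncrossing_def by (metis Suc_le_eq le_neq_implies_less not_less_eq_eq)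
  qed
qed

end

context
  fixes n :: nat and P :: "nat set set" and f :: "nat set \<Rightarrow> nat"
  assumes pp: "pair_partition n P" and nc: "noncrossing P" and fpos: "\<forall>B\<in>P. 0 < f B"
begin

lemma length_word_of: "length (word_of n P f) = n"
  by (simp add: word_of_def)

lemma nth_word_of:
  "i < n \<Longrightarrow> word_of n P f ! i = (if Suc i = Min (block_of P (Suc i)) then f (block_of P (Suc i)) else 0)"
  by (simp add: word_of_def nth_map_upt del: upt_Suc)

lemma word_of_opener: "B \<in> P \<Longrightarrow> word_of n P f ! (Min B - 1) = f B"
proof -
  assume B: "B \<in> P"
  have "block_of P (Min B) = B" using block_of_eq[OF pp B pair_block_Min_in[OF pp B]] .
  moreover have "Min B - 1 < n" "Suc (Min B - 1) = Min B" using pair_blockD[OF pp B] by auto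
  ultimately show ?thesis using nth_word_of[of "Min B - 1"] by simp
qed

lemma word_of_closer: "B \<in> P \<Longrightarrow> word_of n P f ! (Max B - 1) = 0"
proof -
  assume B: "B \<in> P"
  have "block_of P (Max B) = B" using block_of_eq[OF pp B pair_block_Max_in[OF pp B]] .
  moreover have "Max B - 1 < n" "Suc (Max B - 1) = Max B" "Max B \<noteq> Min B"
    using pair_blockD[OF pp B] by auto
  ultimately show ?thesis using nth_word_of[of "Max B - 1"] by simp
qed

lemma word_of_eq_0_closer:
  assumes "t < n" "word_of n P f ! t = 0"
  shows "Suc t = Max (block_of P (Suc t))"
proof -
  have B: "block_of P (Suc t) \<in> P" using block_of_in[OF pp, of "Suc t"] assms(1) by auto
  then have "Suc t \<noteq> Min (block_of P (Suc t))" using assms nth_word_of fpos by fastforce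
  then show ?thesis using block_of_Min_or_Max[OF pp, of "Suc t"] assms(1) by auto
qed

lemma set_stack_word_of: "t \<le> n \<Longrightarrow> set (stack (word_of n P f) t) = open_positions P t"
proof (induction t)
  case 0
  show ?case by (simp add: open_positions_0[OF pp])
next
  case (Suc t)
  then have IH: "set (stack (word_of n P f) t) = open_positions P t" and t: "t < n" by auto
  let ?B = "block_of P (Suc t)"
  have B: "?B \<in> P" using block_of_in[OF pp, of "Suc t"] t by auto
  show ?case
  proof (cases "word_of n P f ! t = 0")
    case False
    then have "Suc t = Min ?B" using nth_word_of[OF t] by argo
    then show ?thesis using IH False by (simp add: open_positions_Suc_opener[OF pp t])
  next
    case True
    then have closer: "Suc t = Max ?B" by (rule word_of_eq_0_closer[OF t])
    have "Min ?B \<in> set (stack (word_of n P f) t)" "\<forall>x\<in>set (stack (word_of n P f) t). x \<le> Min ?B"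
      using open_positions_closer[OF pp nc B closer] IH by auto
    then have "stack (word_of n P f) t = Min ?B # tl (stack (word_of n P f) t)"
      by (rule stack_eq_Cons_Max)
    moreover have "stack (word_of n P f) (Suc t) = tl (stack (word_of n P f) t)" using True by simp
    ultimately have "set (stack (word_of n P f) (Suc t)) = set (stack (word_of n P f) t) - {Min ?B}"
      using distinct_stack[of "word_of n P f" t]
        by (metis Diff_insert_absorb distinct.simps(2) list.simps(15))
    then show ?thesis using IH by (simp add: open_positions_Suc_closer[OF pp t closer])
  qed
qed

lemma hd_stack_word_of_closer:
  assumes "B \<in> P" "Suc t = Max B"
  shows "stack (word_of n P f) t \<noteq> [] \<and> hd (stack (word_of n P f) t) = Min B"
proof -
  have t: "t \<le> n" using pair_blockD(4)[OF pp assms(1)] assms(2) by simp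
  have "Min B \<in> set (stack (word_of n P f) t)" "\<forall>x\<in>set (stack (word_of n P f) t). x \<le> Min B"
    using open_positions_closer[OF pp nc assms] set_stack_word_of[OF t] by auto
  then have "stack (word_of n P f) t = Min B # tl (stack (word_of n P f) t)"
    by (rule stack_eq_Cons_Max)
  then show ?thesis by (metis list.distinct(1) list.sel(1))
qed

lemma balanced_word_of: "balanced (word_of n P f)"
  unfolding balanced_def length_word_of
proof (intro conjI allI impI)
  fix t assume "t < n" "word_of n P f ! t = 0"
  then show "stack (word_of n P f) t \<noteq> []"
    using word_of_eq_0_closer hd_stack_word_of_closer block_of_in[OF pp, of "Suc t"] by auto
next
  show "stack (word_of n P f) n = []"
    using set_stack_word_of[of n] open_positions_length[OF pp] by simp
qed

lemma matching_word_of: "matching (word_of n P f) = P"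
proof (intro equalityI subsetI)
  fix X assume "X \<in> matching (word_of n P f)"
  then obtain t where t: "t < n" "word_of n P f ! t = 0" "X = {hd (stack (word_of n P f) t), Suc t}"
    by (auto simp: matching_def length_word_of)
  let ?B = "block_of P (Suc t)"
  have B: "?B \<in> P" using block_of_in[OF pp, of "Suc t"] t by auto
  have "Suc t = Max ?B" using word_of_eq_0_closer[OF t(1,2)] .
  moreover have "hd (stack (word_of n P f) t) = Min ?B"
    using hd_stack_word_of_closer[OF B] calculation by simp
  ultimately have "X = ?B" using t(3) pair_blockD(1)[OF pp B] by simp
  then show "X \<in> P" using B by simp
next
  fix B assume B: "B \<in> P"
  let ?t = "Max B - 1"
  have t: "?t < length (word_of n P f)" "Suc ?t = Max B"
    using pair_blockD[OF pp B] length_word_of by auto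
  then have "B = {hd (stack (word_of n P f) ?t), Suc ?t}"
    using hd_stack_word_of_closer[OF B] pair_blockD(1)[OF pp B] by simp
  then show "B \<in> matching (word_of n P f)" unfolding matching_def
    using t word_of_closer[OF B] by blast
qed

lemma word_of_pos_opener:
  assumes "i < n" "0 < word_of n P f ! i"
  shows "block_of P (Suc i) \<in> P \<and> Suc i = Min (block_of P (Suc i)) \<and>
    word_of n P f ! i = f (block_of P (Suc i))"
  using assms nth_word_of[OF assms(1)] block_of_in[OF pp, of "Suc i"]
  by (auto split: if_splits)

lemma set_labels_word_of: "set (labels (word_of n P f)) = f ` P"
proof (intro equalityI subsetI)
  fix x assume "x \<in> set (labels (word_of n P f))"
  then obtain i where "i < n" "x = word_of n P f ! i" "0 < x"
    by (auto simp: labels_def in_set_conv_nth length_word_of)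
  then show "x \<in> f ` P" using word_of_pos_opener by auto
next
  fix x assume "x \<in> f ` P"
  then obtain B where B: "B \<in> P" "x = f B" by blast
  then have "Min B - 1 < length (word_of n P f)"
    using pair_blockD[OF pp B(1)] length_word_of by simp
  then show "x \<in> set (labels (word_of n P f))"
    using word_of_opener[OF B(1)] B fpos by (force simp: labels_def in_set_conv_nth)
qed

lemma distinct_labels_word_of:
  assumes "inj_on f P"
  shows "distinct (labels (word_of n P f))"
  unfolding distinct_labels_iff length_word_of
proof (intro allI impI)
  fix i j assume ij: "i < n" "j < n" "0 < word_of n P f ! i" "0 < word_of n P f ! j"
    "word_of n P f ! i = word_of n P f ! j"
  then have "block_of P (Suc i) = block_of P (Suc j)"
    using word_of_pos_opener[of i] word_of_pos_opener[of j] assms by (auto dest: inj_onD)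
  then show "i = j" using word_of_pos_opener[OF ij(1,3)] word_of_pos_opener[OF ij(2,4)] by simp
qed

lemma admissible_word_of:
  assumes chains: "\<And>Bs. Bs \<noteq> [] \<Longrightarrow> set Bs \<subseteq> P \<Longrightarrow> successively (nearest_outer P) Bs \<Longrightarrow> vword (map f Bs)"
  shows "admissible (word_of n P f)"
  unfolding admissible_def
proof (intro conjI allI impI balanced_word_of)
  let ?w = "word_of n P f"
  fix t assume t: "t < length ?w" "0 < ?w ! t"
  let ?B = "block_of P (Suc t)"
  have B: "?B \<in> P" "Suc t = Min ?B"
    using word_of_pos_opener t length_word_of by auto
  obtain Bs where Bs: "Bs \<noteq> []" "set Bs \<subseteq> P" "successively (nearest_outer P) Bs" "map Min Bs = stack ?w (Suc t)"
    using stack_outer_chain[OF balanced_word_of, of ?B]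
      matching_word_of B by auto
  have "map (label_at ?w) (stack ?w (Suc t)) = map f Bs"
    using Bs(2) Bs(4)[symmetric] word_of_opener by (auto simp: label_at_def)
  then show "vword (map (label_at ?w) (stack ?w (Suc t)))" using chains[OF Bs(1-3)] by simp
qed

end

section \<open>Labelled paths and \<open>OV2\<close>\<close>

lemma card_pair_partition: "pair_partition n P \<Longrightarrow> 2 * card P = n"
proof -
  assume pp: "pair_partition n P"
  have "n = card (\<Union>P)" using pp by (simp add: pair_partition_def partition_on_def)
  also have "\<dots> = sum card P"
    using pp by (intro card_Union_disjoint)
      (auto simp: pair_partition_def partition_on_def intro: card_ge_0_finite)
  also have "\<dots> = sum (\<lambda>_. 2) P" using pp by (intro sum.cong) (auto simp: pair_partition_def)
  finally show ?thesis by simp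
qed

lemma labelled_paths_iff:
  "xs \<in> labelled_paths k {1..k} \<longleftrightarrow> length xs = 2 * k \<and> admissible xs \<and>
     distinct (labels xs) \<and> set (labels xs) \<subseteq> {1..k}"
proof -
  have "set (labels xs) = {1..k}"
    if "path_to_vacuum [] xs" "length xs = 2 * k" "distinct (labels xs)"
      "set (labels xs) \<subseteq> {1..k}"
  proof (rule card_subset_eq)
    show "card (set (labels xs)) = card {1..k}"
      using that path_to_vacuum_length[of "[]" xs] distinct_card by fastforce
  qed (use that in auto)
  then show ?thesis
    unfolding labelled_paths_def path_to_vacuum_iff_admissible[symmetric] by auto
qed

lemma successively_iff_nth:
  "successively R xs \<longleftrightarrow> (\<forall>j. Suc j < length xs \<longrightarrow> R (xs ! j) (xs ! Suc j))"
proof (induction xs rule: induct_list012)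
  case (3 x y xs)
  then show ?case by (auto simp: All_less_Suc2 nth_Cons' split: if_splits)
qed simp_all

lemma OV2_iff:
  "(P, f) \<in> OV2 k \<longleftrightarrow> pair_partition (2 * k) P \<and> noncrossing P \<and> f \<in> extensional P \<and>
     bij_betw f P {1..k} \<and>
     (\<forall>Bs. Bs \<noteq> [] \<longrightarrow> set Bs \<subseteq> P \<longrightarrow> successively (nearest_outer P) Bs \<longrightarrow> vword (map f Bs))"
  unfolding OV2_def successively_iff_nth by blast

lemma OV2_label_pos:
  assumes "(P, f) \<in> OV2 k" "B \<in> P"
  shows "0 < f B"
proof -
  have "f B \<in> {1..k}" using assms bij_betw_apply[of f P "{1..k}"] by (simp add: OV2_iff)
  then show ?thesis by simp
qed

lemma word_of_in_labelled_paths: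
  assumes "(P, f) \<in> OV2 k"
  shows "word_of (2 * k) P f \<in> labelled_paths k {1..k}"
proof -
  have pp: "pair_partition (2 * k) P" and nc: "noncrossing P" and bij: "bij_betw f P {1..k}"
    and chains: "\<And>Bs. Bs \<noteq> [] \<Longrightarrow> set Bs \<subseteq> P \<Longrightarrow> successively (nearest_outer P) Bs \<Longrightarrow> vword (map f Bs)"
    using assms by (auto simp: OV2_iff)
  have fpos: "\<forall>B\<in>P. 0 < f B" using OV2_label_pos[OF assms] by blast
  show ?thesis
    unfolding labelled_paths_iff
    using length_word_of[OF pp nc fpos] admissible_word_of[OF pp nc fpos chains]
      distinct_labels_word_of[OF pp nc fpos] set_labels_word_of[OF pp nc fpos] bij
    by (simp add: bij_betw_def)
qed

lemma word_of_matching: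
  assumes dy: "balanced ws" and f: "\<forall>B\<in>matching ws. f B = ws ! (Min B - 1)"
  shows "word_of (length ws) (matching ws) f = ws"
proof (rule nth_equalityI)
  show "length (word_of (length ws) (matching ws) f) = length ws"
    by (simp add: word_of_def del: upt_Suc)
  fix i assume "i < length (word_of (length ws) (matching ws) f)"
  then have i: "i < length ws" by (simp add: word_of_def del: upt_Suc)
  let ?B = "block_of (matching ws) (Suc i)"
  have B: "?B \<in> matching ws" "Suc i \<in> ?B"
    using block_of_in[OF pair_partition_matching[OF dy], of "Suc i"] i by auto
  have "word_of (length ws) (matching ws) f ! i = (if Suc i = Min ?B then f ?B else 0)"
    by (simp add: word_of_def nth_map_upt i del: upt_Suc)
  also have "\<dots> = ws ! i"
  proof (cases "Suc i = Min ?B")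
    case False
    then have "Suc i = Max ?B" using B mem_MinMax_iff[OF matching_blockD(1)[OF dy B(1)]] by blast
    then show ?thesis using False matching_blockD(6)[OF dy B(1)] by simp
  qed (use f B in simp)
  finally show "word_of (length ws) (matching ws) f ! i = ws ! i" .
qed

lemma bij_betw_matching_labels:
  assumes ws: "ws \<in> labelled_paths k {1..k}"
  shows "bij_betw (\<lambda>B. ws ! (Min B - 1)) (matching ws) {1..k}"
proof -
  have len: "length ws = 2 * k" and dy: "balanced ws" and dist: "distinct (labels ws)"
    and labels: "set (labels ws) \<subseteq> {1..k}"
    using ws unfolding labelled_paths_iff admissible_def by auto
  let ?F = "\<lambda>B. ws ! (Min B - 1)"
  note blockD = matching_blockD[OF dy]
  have opener: "Min B - 1 < length ws" "0 < ?F B" if "B \<in> matching ws" for B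
    using blockD(2-5)[OF that] by auto
  have "inj_on ?F (matching ws)"
  proof (rule inj_onI)
    fix B C assume B: "B \<in> matching ws" and C: "C \<in> matching ws" and "?F B = ?F C"
    then have "Min B - 1 = Min C - 1"
      using dist[unfolded distinct_labels_iff] opener[OF B] opener[OF C] by blast
    then show "B = C" using matching_eq_by_Min[OF dy B C] blockD(3)[OF B] blockD(3)[OF C] by simp
  qed
  moreover have "?F ` matching ws \<subseteq> {1..k}"
    using opener labels by (force simp: labels_def)
  moreover have "card (matching ws) = k"
    using card_pair_partition[OF pair_partition_matching[OF dy]] len by simp
  ultimately show ?thesis
    by (simp add: bij_betw_def card_image card_subset_eq)
qed

lemma vword_outer_chain_matching:
  assumes val: "admissible ws" and Bs: "Bs \<noteq> []" "set Bs \<subseteq> matching ws" "successively (nearest_outer (matching ws)) Bs"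
  shows "vword (map (\<lambda>B. ws ! (Min B - 1)) Bs)"
proof -
  have dy: "balanced ws" using val by (simp add: admissible_def)
  let ?B = "hd Bs"
  have B: "?B \<in> matching ws" using Bs by (cases Bs) auto
  have "map (\<lambda>B. ws ! (Min B - 1)) Bs = map (label_at ws) (map Min Bs)"
    by (simp add: label_at_def)
  also have "\<dots> = take (length Bs) (map (label_at ws) (stack ws (Min ?B)))"
    using outer_chain_stack_prefix[OF dy Bs] by (simp add: take_map)
  finally have "map (\<lambda>B. ws ! (Min B - 1)) Bs = take (length Bs) (map (label_at ws) (stack ws (Min ?B)))" .
  moreover have "Min ?B - 1 < length ws" "0 < ws ! (Min ?B - 1)" "Suc (Min ?B - 1) = Min ?B"
    using matching_blockD(2-5)[OF dy B] by auto
  then have "vword (map (label_at ws) (stack ws (Min ?B)))"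
    using val unfolding admissible_def by metis
  ultimately show ?thesis using vword_take by simp
qed

lemma matching_in_OV2:
  assumes ws: "ws \<in> labelled_paths k {1..k}"
  shows "(matching ws, restrict (\<lambda>B. ws ! (Min B - 1)) (matching ws)) \<in> OV2 k"
proof -
  have len: "length ws = 2 * k" and val: "admissible ws"
    using ws unfolding labelled_paths_iff by auto
  then have dy: "balanced ws" by (simp add: admissible_def)
  have "bij_betw (restrict (\<lambda>B. ws ! (Min B - 1)) (matching ws)) (matching ws) {1..k}"
    using bij_betw_matching_labels[OF ws] by simp
  moreover have "vword (map (restrict (\<lambda>B. ws ! (Min B - 1)) (matching ws)) Bs)"
    if "Bs \<noteq> []" "set Bs \<subseteq> matching ws" "successively (nearest_outer (matching ws)) Bs" for Bs
  proof -
    have eq: "map (restrict (\<lambda>B. ws ! (Min B - 1)) (matching ws)) Bs = map (\<lambda>B. ws ! (Min B - 1)) Bs"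
      using that(2) by auto
    show ?thesis using vword_outer_chain_matching[OF val that] by (simp only: eq)
  qed
  ultimately show ?thesis
    using pair_partition_matching[OF dy] noncrossing_matching[OF dy] len by (simp add: OV2_iff)
qed

lemma inj_on_word_of_OV2: "inj_on (\<lambda>(P, f). word_of (2 * k) P f) (OV2 k)"
proof (rule inj_onI, clarify)
  fix P f P' f'
  assume x: "(P, f) \<in> OV2 k" and y: "(P', f') \<in> OV2 k"
    and e: "word_of (2 * k) P f = word_of (2 * k) P' f'"
  have X: "pair_partition (2 * k) P" "noncrossing P" "f \<in> extensional P" "\<forall>B\<in>P. 0 < f B"
    using x OV2_label_pos[OF x] by (auto simp: OV2_iff)
  have Y: "pair_partition (2 * k) P'" "noncrossing P'" "f' \<in> extensional P'" "\<forall>B\<in>P'. 0 < f' B"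
    using y OV2_label_pos[OF y] by (auto simp: OV2_iff)
  have P: "P = P'" using matching_word_of[OF X(1,2,4)] matching_word_of[OF Y(1,2,4)] e by simp
  have "f B = f' B" if "B \<in> P" for B
    using word_of_opener[OF X(1,2,4) that] word_of_opener[OF Y(1,2,4)] that P e by simp
  then show "P = P' \<and> f = f'" using X(3) Y(3) P by (auto intro: extensionalityI)
qed

lemma card_labelled_paths_eq_card_OV2: "card (labelled_paths k {1..k}) = card (OV2 k)"
proof -
  have "(\<lambda>(P, f). word_of (2 * k) P f) ` OV2 k = labelled_paths k {1..k}"
  proof (intro equalityI subsetI)
    fix ws assume ws: "ws \<in> labelled_paths k {1..k}"
    then have "length ws = 2 * k" "balanced ws"
      unfolding labelled_paths_iff admissible_def by auto
    then have "ws = word_of (2 * k) (matching ws) (restrict (\<lambda>B. ws ! (Min B - 1)) (matching ws))"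
      using word_of_matching[of ws] by simp
    then show "ws \<in> (\<lambda>(P, f). word_of (2 * k) P f) ` OV2 k"
      using matching_in_OV2[OF ws] by force
  next
    fix ws assume "ws \<in> (\<lambda>(P, f). word_of (2 * k) P f) ` OV2 k"
    then obtain P f where "(P, f) \<in> OV2 k" "ws = word_of (2 * k) P f" by auto
    then show "ws \<in> labelled_paths k {1..k}" using word_of_in_labelled_paths by simp
  qed
  then show ?thesis using card_image[OF inj_on_word_of_OV2[of k]] by metis
qed

theorem mainTheorem15:
  fixes k :: nat
  shows "((\<lambda>N. vac (omegaN N ^^ (2 * k))) \<longlonglongrightarrow> real (card (OV2 k)) / fact k) \<and>
         ((\<lambda>N. vac (omegaN N ^^ (2 * k + 1))) \<longlonglongrightarrow> 0)"
proof
  show "(\<lambda>N. vac (omegaN N ^^ (2 * k))) \<longlonglongrightarrow> real (card (OV2 k)) / fact k"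
    unfolding card_labelled_paths_eq_card_OV2[symmetric] by (rule vac_omegaN_power_even_tendsto)
  show "(\<lambda>N. vac (omegaN N ^^ (2 * k + 1))) \<longlonglongrightarrow> 0"
    unfolding vac_omegaN_power_odd by (rule tendsto_const)
qed

end
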